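(* Let $T$ be as in the context. If a directed cycle in $T$ contains exactly $l$ restricted vertices, then it contains exactly $l$ floor vertices.
   Context: Let $A$ be a finite alphabet with a linear order $<$, extended to the lexicographic order on words. Let $\mathcal{F}$ be a set of words over $A$ (forbidden words). A word $w$ is in the language if the bi-infinite periodic sequence $\cdots www\cdots$ contains no element of $\mathcal{F}$ as a factor; $W_k$ denotes the set of words of length $k$ in the language. Fix $n\geq 1$ and consider the digraph with vertex set $A^n$ and arcs $(as,sb)$ for $a,b\in A$, $s\in A^{n-1}$, $asb\in W_{n+1}$, the label of $(as,sb)$ being $b$. The de Bruijn graph of span $n$, $G_n$, is a strongly connected component of maximum size of this digraph; vertices are identified with their words. Let $m=m_1\cdots m_n$ be the vertex of $G_n$ whose word is lexicographically largest. For each vertex $v$, let $e(v)$ be the arc of $G_n$ with tail $v$ having maximum label, and $\gamma(v)$ its label. $T$ is the spanning subgraph of $G_n$ with arc set $\{e(v): v\in V(G_n), v\neq m\}$ (so $m$ lies on no cycle of $T$). For a vertex $u\neq m$, $g(u)$ is the longest word which is both a prefix of $m$ and a suffix of $u$ (possibly empty), and $\alpha(u)=m_{|g(u)|+1}$. A vertex $u\ne m$ is a floor vertex if $g(u)$ is the empty word, and a restricted vertex if $\gamma(u)<\alpha(u)$. *)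

theory Defs
  imports Main "HOL-Library.List_Lexorder"
begin

text \<open>Words are lists over a finite linearly ordered alphabet (the type 'a).
  Lists carry the lexicographic order from List_Lexorder.\<close>

definition occurs_periodic :: "'a list \<Rightarrow> 'a list \<Rightarrow> bool" where
  "occurs_periodic u w \<longleftrightarrow>
     (\<exists>i::nat. u = map (\<lambda>j. w ! ((i + j) mod length w)) [0..<length u])"

definition in_lang :: "'a list set \<Rightarrow> 'a list \<Rightarrow> bool" where
  "in_lang F w \<longleftrightarrow> w \<noteq> [] \<and> (\<forall>u\<in>F. \<not> occurs_periodic u w)"

definition W :: "'a list set \<Rightarrow> nat \<Rightarrow> 'a list set" where
  "W F k = {w. length w = k \<and> in_lang F w}"

definition db_arcs :: "'a list set \<Rightarrow> nat \<Rightarrow> ('a list \<times> 'a list) set" where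
  "db_arcs F n = {(a # s, s @ [b]) | a s b. length s = n - 1 \<and> a # s @ [b] \<in> W F (n + 1)}"

definition is_scc :: "('b \<times> 'b) set \<Rightarrow> 'b set \<Rightarrow> 'b set \<Rightarrow> bool" where
  "is_scc R Vall V \<longleftrightarrow> V \<subseteq> Vall \<and> V \<noteq> {} \<and>
     (\<forall>x\<in>V. \<forall>y\<in>V. (x, y) \<in> R\<^sup>*) \<and>
     (\<forall>x\<in>V. \<forall>y\<in>Vall. (x, y) \<in> R\<^sup>* \<and> (y, x) \<in> R\<^sup>* \<longrightarrow> y \<in> V)"

definition is_debruijn :: "'a list set \<Rightarrow> nat \<Rightarrow> 'a list set \<Rightarrow> bool" where
  "is_debruijn F n V \<longleftrightarrow> is_scc (db_arcs F n) {v. length v = n} V \<and>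
     (\<forall>V'. is_scc (db_arcs F n) {v. length v = n} V' \<longrightarrow> card V' \<le> card V)"

definition G_arcs :: "'a list set \<Rightarrow> nat \<Rightarrow> 'a list set \<Rightarrow> ('a list \<times> 'a list) set" where
  "G_arcs F n V = db_arcs F n \<inter> (V \<times> V)"

definition gamma :: "'a::linorder list set \<Rightarrow> nat \<Rightarrow> 'a list set \<Rightarrow> 'a list \<Rightarrow> 'a" where
  "gamma F n V v = Max {b. (v, tl v @ [b]) \<in> G_arcs F n V}"

definition T_arcs :: "'a::{finite,linorder} list set \<Rightarrow> nat \<Rightarrow> 'a list set \<Rightarrow> ('a list \<times> 'a list) set" where
  "T_arcs F n V = {(v, tl v @ [gamma F n V v]) | v. v \<in> V \<and> v \<noteq> Max V \<and>
                     (\<exists>b. (v, tl v @ [b]) \<in> G_arcs F n V)}"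

text \<open>length of g(u): longest prefix of m that is a suffix of u\<close>
definition glen :: "'a list \<Rightarrow> 'a list \<Rightarrow> nat" where
  "glen m u = (GREATEST k. k \<le> length u \<and> take k m = drop (length u - k) u)"

definition alpha :: "'a list \<Rightarrow> 'a list \<Rightarrow> 'a" where
  "alpha m u = m ! glen m u"

definition floor_vertex :: "'a list \<Rightarrow> 'a list \<Rightarrow> bool" where
  "floor_vertex m u \<longleftrightarrow> u \<noteq> m \<and> glen m u = 0"

definition restricted :: "'a::{finite,linorder} list set \<Rightarrow> nat \<Rightarrow> 'a list set \<Rightarrow> 'a list \<Rightarrow> bool" where
  "restricted F n V u \<longleftrightarrow> u \<noteq> Max V \<and> gamma F n V u < alpha (Max V) u"

definition is_cycle :: "('b \<times> 'b) set \<Rightarrow> 'b list \<Rightarrow> bool" where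
  "is_cycle E c \<longleftrightarrow> c \<noteq> [] \<and> distinct c \<and>
     (\<forall>i<length c. (c ! i, c ! ((i + 1) mod length c)) \<in> E)"

end

theory Submission
  imports Defs
begin

text \<open>Let m be the largest vertex and u \<noteq> m a vertex with an arc to u' = tl u @ [b]. Then
  g(u') is empty iff b < \<alpha>(u): for b = \<alpha>(u) the border g(u) grows by one letter; b > \<alpha>(u)
  is impossible, since extending the suffix g(u) b of u' to a vertex gives a word exceeding m; and
  for b < \<alpha>(u) a nonempty border of u' would yield a shorter border of u, which shifted inside
  m again yields a vertex exceeding m. Applied to the arc of T leaving u (label \<gamma>(u)), the
  successor on the cycle of a vertex is a floor vertex iff the vertex is restricted, so rotating
  the cycle by one step matches the two sets.\<close>

lemma list_less_if_first_difference:
  fixes m w :: "'a::linorder list"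
  assumes "length w = length m" "i < length m" "take i w = take i m" "m ! i < w ! i"
  shows "m < w"
proof -
  have "m = take i m @ m ! i # drop (Suc i) m" using assms by (simp add: id_take_nth_drop)
  moreover have "w = take i m @ w ! i # drop (Suc i) w" using assms by (metis id_take_nth_drop)
  ultimately show ?thesis using assms(4) unfolding list_less_def
    by (metis (mono_tags, lifting) case_prodI lexord_append_left_rightI mem_Collect_eq)
qed

lemma drop_tl_snoc:
  assumes "j < length u"
  shows "drop (length u - Suc j) (tl u @ [g]) = drop (length u - j) u @ [g]"
proof -
  have "tl (drop (length u - Suc j) u) = drop (Suc (length u - Suc j)) u"
    by (metis drop_Suc drop_tl)
  also have "Suc (length u - Suc j) = length u - j" using assms by simp
  finally show ?thesis using assms by (simp add: drop_tl)
qed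

lemma glen_border: "take (glen m u) m = drop (length u - glen m u) u"
  and glen_le_length: "glen m u \<le> length u"
proof -
  let ?P = "\<lambda>k. k \<le> length u \<and> take k m = drop (length u - k) u"
  have "?P (Greatest ?P)" by (rule GreatestI_nat[where k = 0 and b = "length u"]) auto
  then show "take (glen m u) m = drop (length u - glen m u) u" "glen m u \<le> length u"
    unfolding glen_def by auto
qed

lemma glen_greatest: "k \<le> length u \<Longrightarrow> take k m = drop (length u - k) u \<Longrightarrow> k \<le> glen m u"
  unfolding glen_def by (rule Greatest_le_nat[where b = "length u"]) auto

lemma glen_self: "glen m m = length m"
  using glen_greatest[of "length m" m m] glen_le_length[of m m] by simp

lemma Suc_glen_le_glen_snoc:
  assumes "glen m u < length u" "glen m u < length m"
  shows "Suc (glen m u) \<le> glen m (tl u @ [m ! glen m u])"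
proof (rule glen_greatest)
  let ?k = "glen m u"
  have "take (Suc ?k) m = take ?k m @ [m ! ?k]" using assms(2) by (simp add: take_Suc_conv_app_nth)
  also have "\<dots> = drop (length u - Suc ?k) (tl u @ [m ! ?k])"
    using glen_border[of m u] drop_tl_snoc[OF assms(1)] by simp
  finally show "take (Suc ?k) m = drop (length (tl u @ [m ! ?k]) - Suc ?k) (tl u @ [m ! ?k])"
    using assms(1) by simp
qed (use assms in auto)

locale shift_closed_words =
  fixes V :: "'a::linorder list set" and n :: nat and m :: "'a list"
  assumes length_eq: "x \<in> V \<Longrightarrow> length x = n"
    and shift_closed: "x \<in> V \<Longrightarrow> \<exists>b. tl x @ [b] \<in> V"
    and max_in: "m \<in> V"
    and le_max: "w \<in> V \<Longrightarrow> w \<le> m"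
begin

lemma suffix_extends: "x \<in> V \<Longrightarrow> t \<le> n \<Longrightarrow> \<exists>w\<in>V. take (n - t) w = drop t x"
proof (induction t)
  case 0
  then show ?case using length_eq by auto
next
  case (Suc t)
  then obtain w where "w \<in> V" and w: "take (n - t) w = drop t x" by auto
  then obtain b where "tl w @ [b] \<in> V" using shift_closed by blast
  have "take (n - Suc t) (tl w @ [b]) = tl (take (Suc (n - Suc t)) w)"
    using length_eq[OF \<open>w \<in> V\<close>] Suc.prems by (simp add: take_tl)
  also have "\<dots> = drop (Suc t) x" using w Suc.prems by (simp add: Suc_diff_Suc drop_Suc drop_tl)
  finally show ?case using \<open>tl w @ [b] \<in> V\<close> by blast
qed

lemma not_less_at_first_difference:
  assumes "w \<in> V" "j < n" "take j w = take j m"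
  shows "\<not> m ! j < w ! j"
  using list_less_if_first_difference[of w m j] le_max[of w] assms length_eq[of w] length_eq[OF max_in]
  by (auto simp: leD)

lemma glen_less: "u \<in> V \<Longrightarrow> u \<noteq> m \<Longrightarrow> glen m u < n"
  using glen_le_length[of m u] glen_border[of m u] length_eq[of u] length_eq[OF max_in]
  by (metis diff_self_eq_0 drop_0 le_neq_implies_less take_all)

lemma successor_letter_le:
  assumes "u \<in> V" "u \<noteq> m" "tl u @ [g] \<in> V"
  shows "g \<le> m ! glen m u"
proof (rule ccontr)
  let ?k = "glen m u"
  assume "\<not> g \<le> m ! ?k"
  have "?k < n" using glen_less assms by blast
  have "length u = n" using length_eq assms by blast
  obtain w where "w \<in> V" and "take (Suc ?k) w = drop (n - Suc ?k) (tl u @ [g])"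
    using suffix_extends[OF assms(3), of "n - Suc ?k"] \<open>?k < n\<close> by auto
  then have w_prefix: "take (Suc ?k) w = take ?k m @ [g]"
    using drop_tl_snoc[of ?k u g] glen_border[of m u] \<open>?k < n\<close> \<open>length u = n\<close> by simp
  have "length m = n" using length_eq max_in by blast
  have "take ?k w = take ?k (take (Suc ?k) w)" "w ! ?k = take (Suc ?k) w ! ?k" by simp_all
  then have "take ?k w = take ?k m" "w ! ?k = g"
    using w_prefix \<open>?k < n\<close> \<open>length m = n\<close> by (simp_all add: nth_append)
  then show False
    using not_less_at_first_difference[OF \<open>w \<in> V\<close> \<open>?k < n\<close>] \<open>\<not> g \<le> m ! ?k\<close> by simp
qed

text \<open>If the successor had a nonempty border i + 1 < k + 1, then i would be a border of u
  inside the border k, so m agrees with its own shift by k - i on the first i letters; extending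
  that shifted suffix of m inside V gives a word beating m at position i.\<close>
lemma glen_successor_eq_0:
  assumes "u \<in> V" "u \<noteq> m" "tl u @ [g] \<in> V" "g < m ! glen m u"
  shows "glen m (tl u @ [g]) = 0"
proof (rule ccontr)
  let ?k = "glen m u" and ?u' = "tl u @ [g]"
  assume "glen m ?u' \<noteq> 0"
  then obtain i where i: "glen m ?u' = Suc i" using not0_implies_Suc by blast
  have "length u = n" "length m = n" "length ?u' = n" using length_eq assms max_in by blast+
  have "?k < n" using glen_less assms by blast
  have "i < n" using glen_le_length[of m ?u'] i \<open>length ?u' = n\<close> by simp
  have "take i m @ [m ! i] = take (Suc i) m" using \<open>i < n\<close> \<open>length m = n\<close>
    by (simp add: take_Suc_conv_app_nth)
  also have "\<dots> = drop (n - Suc i) ?u'" using glen_border[of m ?u'] unfolding i \<open>length ?u' = n\<close> .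
  also have "\<dots> = drop (n - i) u @ [g]" using drop_tl_snoc[of i u g] \<open>i < n\<close> \<open>length u = n\<close> by simp
  finally have border_i: "take i m = drop (n - i) u" and "m ! i = g" by simp_all
  have "i \<le> ?k" using glen_greatest[of i u m] border_i \<open>i < n\<close> \<open>length u = n\<close> by simp
  moreover have "i \<noteq> ?k" using \<open>m ! i = g\<close> assms(4) by auto
  ultimately have "i < ?k" by simp
  define t where "t = ?k - i"
  have "t \<le> n" using t_def \<open>?k < n\<close> by simp
  then obtain w where "w \<in> V" and w: "take (n - t) w = drop t m"
    using suffix_extends[OF max_in] by blast
  have "i < n - t" using t_def \<open>i < ?k\<close> \<open>?k < n\<close> by simp
  have "take i w = take i (take (n - t) w)" using \<open>i < n - t\<close> by simp
  also have "\<dots> = take i (drop t m)" using w by simp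
  also have "\<dots> = drop t (take ?k m)" using t_def \<open>i < ?k\<close> by (simp add: take_drop)
  also have "\<dots> = drop t (drop (n - ?k) u)" using glen_border[of m u] \<open>length u = n\<close> by simp
  also have "\<dots> = take i m" using border_i t_def \<open>i < ?k\<close> \<open>?k < n\<close> by (simp add: add.commute)
  finally have "take i w = take i m" .
  have "w ! i = take (n - t) w ! i" using \<open>i < n - t\<close> by simp
  also have "\<dots> = drop t m ! i" using w by simp
  also have "\<dots> = m ! ?k" using t_def \<open>i < ?k\<close> \<open>?k < n\<close> \<open>length m = n\<close> by simp
  finally have "w ! i = m ! ?k" .
  with \<open>take i w = take i m\<close> show False
    using not_less_at_first_difference[OF \<open>w \<in> V\<close> \<open>i < n\<close>] \<open>m ! i = g\<close> assms(4) by simp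
qed

lemma glen_successor_eq_0_iff:
  assumes "u \<in> V" "u \<noteq> m" "tl u @ [g] \<in> V"
  shows "glen m (tl u @ [g]) = 0 \<longleftrightarrow> g < m ! glen m u"
proof
  assume "glen m (tl u @ [g]) = 0"
  moreover have "glen m u < length u" "glen m u < length m"
    using glen_less assms length_eq max_in by auto
  ultimately have "g \<noteq> m ! glen m u" using Suc_glen_le_glen_snoc by fastforce
  then show "g < m ! glen m u" using successor_letter_le[OF assms] by simp
qed (use glen_successor_eq_0 assms in blast)

end

lemma finite_scc_words:
  fixes V :: "'a::finite list set"
  assumes "is_scc R {v. length v = n} V"
  shows "finite V"
proof (rule finite_subset)
  show "V \<subseteq> {xs. set xs \<subseteq> UNIV \<and> length xs = n}" using assms unfolding is_scc_def by auto
qed (rule finite_lists_length_eq, simp)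

lemma scc_shift_closed:
  assumes scc: "is_scc (db_arcs F n) {v. length v = n} V"
    and "x \<in> V" "z \<in> V" "x \<noteq> z"
  shows "\<exists>b. tl x @ [b] \<in> V"
proof -
  let ?R = "db_arcs F n"
  have lengths: "V \<subseteq> {v. length v = n}" and strong: "\<forall>x\<in>V. \<forall>y\<in>V. (x, y) \<in> ?R\<^sup>*"
    and closed: "\<forall>x\<in>V. \<forall>y\<in>{v. length v = n}. (x, y) \<in> ?R\<^sup>* \<and> (y, x) \<in> ?R\<^sup>* \<longrightarrow> y \<in> V"
    using scc unfolding is_scc_def by blast+
  have "(x, z) \<in> ?R\<^sup>*" using strong assms(2,3) by blast
  then obtain y where "(x, y) \<in> ?R" and "(y, z) \<in> ?R\<^sup>*"
    using \<open>x \<noteq> z\<close> by (metis converse_rtranclE)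
  then obtain a s b where x: "x = a # s" and y: "y = s @ [b]" and "length s = n - 1"
    unfolding db_arcs_def by blast
  have "length x = n" using lengths \<open>x \<in> V\<close> by blast
  then have "length y = n" using x y \<open>length s = n - 1\<close> by simp
  have "(z, x) \<in> ?R\<^sup>*" using strong assms(2,3) by blast
  then have "(y, x) \<in> ?R\<^sup>*" using \<open>(y, z) \<in> ?R\<^sup>*\<close> by (meson rtrancl_trans)
  then have "y \<in> V" using closed \<open>x \<in> V\<close> \<open>length y = n\<close> \<open>(x, y) \<in> ?R\<close> by blast
  then show ?thesis using x y by auto
qed

lemma T_arcsD:
  assumes "(u, u') \<in> T_arcs F n V"
  shows "u \<in> V" "u \<noteq> Max V" "u' = tl u @ [gamma F n V u]" "u' \<in> V"
proof -
  show "u \<in> V" "u \<noteq> Max V" "u' = tl u @ [gamma F n V u]"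
    using assms unfolding T_arcs_def by auto
  have "\<exists>b. (u, tl u @ [b]) \<in> G_arcs F n V" using assms unfolding T_arcs_def by auto
  then have "gamma F n V u \<in> {b. (u, tl u @ [b]) \<in> G_arcs F n V}"
    unfolding gamma_def by (intro Max_in) auto
  then show "u' \<in> V" using \<open>u' = tl u @ [gamma F n V u]\<close> unfolding G_arcs_def by auto
qed

lemma floor_vertex_iff_restricted:
  fixes F :: "'a::{finite,linorder} list set"
  assumes scc: "is_scc (db_arcs F n) {v. length v = n} V" and arc: "(u, u') \<in> T_arcs F n V"
  shows "floor_vertex (Max V) u' \<longleftrightarrow> restricted F n V u"
proof -
  let ?m = "Max V"
  note u = T_arcsD[OF arc]
  have "finite V" using finite_scc_words[OF scc] .
  then have "?m \<in> V" using u(1) by (intro Max_in) auto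
  interpret shift_closed_words V n ?m
  proof
    show "x \<in> V \<Longrightarrow> length x = n" for x using scc unfolding is_scc_def by blast
    show "w \<in> V \<Longrightarrow> w \<le> ?m" for w using \<open>finite V\<close> by simp
  next
    fix x assume "x \<in> V"
    show "\<exists>b. tl x @ [b] \<in> V"
    proof (cases "x = ?m")
      case True
      then show ?thesis using scc_shift_closed[OF scc \<open>x \<in> V\<close> u(1)] u(2) by auto
    qed (use scc_shift_closed[OF scc \<open>x \<in> V\<close> \<open>?m \<in> V\<close>] in auto)
  qed (fact \<open>?m \<in> V\<close>)
  have "n \<noteq> 0" using length_eq[OF u(4)] u(3) by simp
  then have "glen ?m ?m \<noteq> 0" using glen_self[of ?m] length_eq[OF max_in] by simp
  then have "floor_vertex ?m u' \<longleftrightarrow> glen ?m u' = 0" unfolding floor_vertex_def by auto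
  also have "\<dots> \<longleftrightarrow> restricted F n V u"
    using glen_successor_eq_0_iff[OF u(1,2)] u(2-4) unfolding restricted_def alpha_def by simp
  finally show ?thesis .
qed

lemma card_filter_cycle_shift:
  assumes "distinct c"
    and shift: "\<And>i. i < length c \<Longrightarrow> Q (c ! ((i + 1) mod length c)) \<longleftrightarrow> P (c ! i)"
  shows "card {v \<in> set c. Q v} = card {v \<in> set c. P v}"
proof -
  let ?L = "length c" and ?next = "\<lambda>i. (i + 1) mod length c"
  have card_indices: "card {v \<in> set c. R v} = card {i. i < ?L \<and> R (c ! i)}" for R
  proof -
    have "{v \<in> set c. R v} = (!) c ` {i. i < ?L \<and> R (c ! i)}" by (auto simp: in_set_conv_nth)
    moreover have "inj_on ((!) c) {i. i < ?L \<and> R (c ! i)}"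
      using assms(1) by (intro inj_on_nth) auto
    ultimately show ?thesis by (simp add: card_image)
  qed
  have "inj_on ?next {..<?L}" unfolding inj_on_def by (auto simp: mod_Suc split: if_splits)
  moreover have "?next ` {..<?L} = {..<?L}"
    using \<open>inj_on ?next {..<?L}\<close> by (intro endo_inj_surj) (auto intro!: mod_less_divisor)
  ultimately have "bij_betw ?next {..<?L} {..<?L}" unfolding bij_betw_def ..
  then have "bij_betw ?next {i \<in> {..<?L}. P (c ! i)} {j \<in> {..<?L}. Q (c ! j)}"
    using shift by (intro bij_betw_Collect) auto
  then have "card {i. i < ?L \<and> P (c ! i)} = card {j. j < ?L \<and> Q (c ! j)}"
    by (simp add: bij_betw_same_card)
  then show ?thesis using card_indices by simp
qed

theorem corollary2:
  fixes F :: "('a::{finite,linorder}) list set" and n :: nat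
    and V :: "'a list set" and c :: "'a list list" and l :: nat
  assumes "n \<ge> 1"
    and "is_debruijn F n V"
    and "is_cycle (T_arcs F n V) c"
    and "card {v \<in> set c. restricted F n V v} = l"
  shows "card {v \<in> set c. floor_vertex (Max V) v} = l"
proof -
  have scc: "is_scc (db_arcs F n) {v. length v = n} V"
    using assms(2) unfolding is_debruijn_def by blast
  have "distinct c" and arcs: "\<And>i. i < length c \<Longrightarrow> (c ! i, c ! ((i + 1) mod length c)) \<in> T_arcs F n V"
    using assms(3) unfolding is_cycle_def by auto
  have "card {v \<in> set c. floor_vertex (Max V) v} = card {v \<in> set c. restricted F n V v}"
    using card_filter_cycle_shift[where P = "restricted F n V" and Q = "floor_vertex (Max V)"]
      \<open>distinct c\<close> floor_vertex_iff_restricted[OF scc arcs] by blast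
  with assms(4) show ?thesis by simp
qed

end
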